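(* In the setting of the adaptive implicit-explicit iteration described in the context, let $a>0$ and suppose the step size satisfies $\eta^{-1}\ge\|\bm T\|+2a$. Then for every $k\ge0$, $f(\bm d_k)-f(\bm d_{k+1})\ge a\|\bm d_{k+1}-\bm d_k\|_2^2$ and $L(\bm d_k,\beta_k)-L(\bm d_{k+1},\beta_{k+1})\ge a\|\bm d_{k+1}-\bm d_k\|_2^2$.
   Context: Let $n\ge1$, $r>0$, $\bm g\in\mathbb R^n$ with $\bm g\neq0$, and $\bm H=\bm D+\bm T\in\mathbb R^{n\times n}$, where $\bm D$ is diagonal with nonnegative diagonal entries $D_{i,i}$ and $\bm T$ is symmetric; $\|\bm T\|$ is the spectral norm. Let $f(\bm d)=\bm g^\top\bm d+\frac12\bm d^\top\bm H\bm d$ and $L(\bm d,\beta)=f(\bm d)+\frac{\beta^2}{2}(\|\bm d\|_2^2-r^2)$. Adaptive implicit-explicit iteration with step size $\eta>0$: set $\bm d_0=-r\bm g/\|\bm g\|_2$ and $\lambda_0=0$. For $k=0,1,2,\dots$: let $\bm b_k=\bm d_k-\eta(\bm g+\bm T\bm d_k)$ and $\phi_k(\lambda)=\sum_{i=1}^n\big([\bm b_k]_i/(1+\eta(D_{i,i}+\lambda))\big)^2$; set $\lambda_{k+1}=0$ if $\phi_k(0)\le r^2$, and otherwise let $\lambda_{k+1}>0$ be the solution of $\phi_k(\lambda)=r^2$; then $\bm d_{k+1}=(\bm I+\eta(\bm D+\lambda_{k+1}\bm I))^{-1}\bm b_k$. Finally $\beta_k=\sqrt{\lambda_k}$. *)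

theory Defs
  imports "HOL-Analysis.Analysis"
begin

definition aie_phi :: "real \<Rightarrow> real^'n^'n \<Rightarrow> real^'n \<Rightarrow> real \<Rightarrow> real" where
  "aie_phi \<eta> D b lam = (\<Sum>i\<in>UNIV. (b$i / (1 + \<eta> * (D$i$i + lam)))^2)"

definition aie_lambda :: "real \<Rightarrow> real \<Rightarrow> real^'n^'n \<Rightarrow> real^'n \<Rightarrow> real" where
  "aie_lambda \<eta> r D b =
     (if aie_phi \<eta> D b 0 \<le> r^2 then 0
      else (THE lam. lam > 0 \<and> aie_phi \<eta> D b lam = r^2))"

primrec aie_iter :: "real \<Rightarrow> real \<Rightarrow> real^'n \<Rightarrow> real^'n^'n \<Rightarrow> real^'n^'n \<Rightarrow> nat \<Rightarrow> (real^'n) \<times> real" where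
  "aie_iter \<eta> r g D T 0 = (- (r / norm g) *\<^sub>R g, 0)"
| "aie_iter \<eta> r g D T (Suc k) =
     (let d = fst (aie_iter \<eta> r g D T k);
          b = d - \<eta> *\<^sub>R (g + T *v d);
          lam = aie_lambda \<eta> r D b
      in (matrix_inv (mat 1 + \<eta> *\<^sub>R (D + lam *\<^sub>R mat 1)) *v b, lam))"

definition aie_d :: "real \<Rightarrow> real \<Rightarrow> real^'n \<Rightarrow> real^'n^'n \<Rightarrow> real^'n^'n \<Rightarrow> nat \<Rightarrow> real^'n" where
  "aie_d \<eta> r g D T k = fst (aie_iter \<eta> r g D T k)"

definition aie_beta :: "real \<Rightarrow> real \<Rightarrow> real^'n \<Rightarrow> real^'n^'n \<Rightarrow> real^'n^'n \<Rightarrow> nat \<Rightarrow> real" where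
  "aie_beta \<eta> r g D T k = sqrt (snd (aie_iter \<eta> r g D T k))"

definition trs_f :: "real^'n \<Rightarrow> real^'n^'n \<Rightarrow> real^'n \<Rightarrow> real" where
  "trs_f g H d = g \<bullet> d + 1/2 * (d \<bullet> (H *v d))"

definition trs_L :: "real \<Rightarrow> real^'n \<Rightarrow> real^'n^'n \<Rightarrow> real^'n \<Rightarrow> real \<Rightarrow> real" where
  "trs_L r g H d \<beta> = trs_f g H d + \<beta>^2 / 2 * ((norm d)^2 - r^2)"

end

(* Write e = d_{k+1}, d = d_k and w = d - e.  The update says exactly that
   g + (D + T) e = w / eta - lambda e - T w, so expanding the quadratic f around e gives
     f(d) - f(e) = |w|^2 / eta + lambda <e, e - d> + <w, D w> / 2 - <w, T w> / 2.
   The second term is nonnegative because lambda > 0 forces |e| = r >= |d|, the third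
   because D is diagonal with nonnegative entries, and the last is at most |T| |w|^2 / 2;
   the step size condition leaves at least a |w|^2.  Since the secular function phi is
   strictly decreasing, lambda_{k+1} is well defined and satisfies the complementarity
   condition lambda_{k+1} (|d_{k+1}|^2 - r^2) = 0, so L(d_k, beta_k) = f(d_k) along the
   iteration and the second inequality is the first one. *)

theory Submission
  imports Defs
begin

lemma diagonal_matrix_vector_mult:
  fixes A :: "'a::semiring_1^'n^'n"
  assumes "\<And>i j. i \<noteq> j \<Longrightarrow> A$i$j = 0"
  shows "A *v x = (\<chi> i. A$i$i * x$i)"
proof -
  have "(\<Sum>j\<in>UNIV. A$i$j * x$j) = A$i$i * x$i" for i
    using assms by (subst sum.remove[of UNIV i]) (auto intro!: sum.neutral)
  then show ?thesis by (simp add: matrix_vector_mult_def vec_eq_iff)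
qed

lemma diagonal_matrix_inv_mult:
  fixes A :: "'a::field^'n^'n"
  assumes diag: "\<And>i j. i \<noteq> j \<Longrightarrow> A$i$j = 0" and nz: "\<And>i. A$i$i \<noteq> 0"
  shows "matrix_inv A *v b = (\<chi> i. b$i / A$i$i)"
proof -
  have "invertible A"
    using det_diagonal[OF diag] nz by (simp add: invertible_det_nz)
  then have "A ** matrix_inv A = mat 1"
    unfolding invertible_def matrix_inv_def by (rule someI_ex[THEN conjunct1])
  then have "A *v (matrix_inv A *v b) = b"
    by (simp add: matrix_vector_mul_assoc)
  then show ?thesis
    using nz by (auto simp: diagonal_matrix_vector_mult[OF diag] vec_eq_iff field_simps)
qed

lemma diagonal_transpose:
  assumes "\<And>i j. i \<noteq> j \<Longrightarrow> A$i$j = 0"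
  shows "transpose A = A"
  using assms by (auto simp: transpose_def vec_eq_iff) (metis)

lemma diagonal_quadratic_form_nonneg:
  fixes A :: "real^'n^'n"
  assumes "\<And>i j. i \<noteq> j \<Longrightarrow> A$i$j = 0" and "\<And>i. A$i$i \<ge> 0"
  shows "x \<bullet> (A *v x) \<ge> 0"
proof -
  have "x \<bullet> (A *v x) = (\<Sum>i\<in>UNIV. A$i$i * (x$i)^2)"
    by (simp add: diagonal_matrix_vector_mult[OF assms(1)] inner_vec_def power2_eq_square
        algebra_simps)
  then show ?thesis
    using assms(2) by (simp add: sum_nonneg)
qed

lemma symmetric_matrix_inner_commute:
  fixes A :: "real^'n^'n"
  assumes "transpose A = A"
  shows "x \<bullet> (A *v y) = y \<bullet> (A *v x)"
  by (metis assms dot_lmul_matrix inner_commute vector_transpose_matrix)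

lemma quadratic_form_le_onorm:
  fixes A :: "real^'n^'n"
  shows "x \<bullet> (A *v x) \<le> onorm (\<lambda>x. A *v x) * (norm x)^2"
proof -
  have "x \<bullet> (A *v x) \<le> norm x * norm (A *v x)"
    by (rule norm_cauchy_schwarz)
  also have "\<dots> \<le> norm x * (onorm (\<lambda>x. A *v x) * norm x)"
    by (intro mult_left_mono onorm) simp_all
  finally show ?thesis by (simp add: power2_eq_square algebra_simps)
qed

lemma trs_f_add:
  assumes "transpose H = H"
  shows "trs_f g H (x + v) = trs_f g H x + (g + H *v x) \<bullet> v + v \<bullet> (H *v v) / 2"
  using symmetric_matrix_inner_commute[OF assms, of x v]
  by (simp add: trs_f_def matrix_vector_right_distrib inner_add_left inner_add_right
      inner_commute field_simps)

lemma aie_step_energy_identity: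
  fixes D T :: "real^'n^'n"
  assumes "transpose D = D" and "transpose T = T" and "\<eta> > 0"
    and step: "e + \<eta> *\<^sub>R (D *v e + lam *\<^sub>R e) = d - \<eta> *\<^sub>R (g + T *v d)"
  shows "trs_f g (D + T) d - trs_f g (D + T) e
    = (norm (d - e))^2 / \<eta> + lam * (e \<bullet> (e - d))
      + (d - e) \<bullet> (D *v (d - e)) / 2 - (d - e) \<bullet> (T *v (d - e)) / 2"
proof -
  define w where "w = d - e"
  have "transpose (D + T) = D + T"
    using assms(1,2) by (simp add: transpose_def vec_eq_iff)
  then have expansion: "trs_f g (D + T) d - trs_f g (D + T) e
      = (g + (D + T) *v e) \<bullet> w + w \<bullet> (D *v w) / 2 + w \<bullet> (T *v w) / 2"
    using trs_f_add[of "D + T" g e w]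
    by (simp add: w_def matrix_vector_mult_add_rdistrib inner_add_right add_divide_distrib)
  have "\<eta> *\<^sub>R (g + (D + T) *v e) = w - \<eta> *\<^sub>R (lam *\<^sub>R e + T *v w)"
    using step unfolding w_def
    by (simp add: matrix_vector_mult_add_rdistrib matrix_vector_mult_diff_distrib algebra_simps)
  then have "(1 / \<eta>) *\<^sub>R (\<eta> *\<^sub>R (g + (D + T) *v e))
      = (1 / \<eta>) *\<^sub>R (w - \<eta> *\<^sub>R (lam *\<^sub>R e + T *v w))"
    by simp
  then have "g + (D + T) *v e = (1 / \<eta>) *\<^sub>R w - lam *\<^sub>R e - T *v w"
    using \<open>\<eta> > 0\<close> by (simp add: algebra_simps)
  then have gradient: "(g + (D + T) *v e) \<bullet> w = (norm w)^2 / \<eta> - lam * (e \<bullet> w) - w \<bullet> (T *v w)"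
    by (simp add: inner_diff_left inner_diff_right power2_norm_eq_inner inner_commute)
  have "e \<bullet> (e - d) = - (e \<bullet> w)"
    by (simp add: w_def inner_diff_right)
  then show ?thesis
    using expansion gradient by (simp add: w_def[symmetric])
qed

lemma inner_diff_nonneg_if_norm_le:
  fixes x y :: "'a::real_inner"
  assumes "norm y \<le> norm x"
  shows "0 \<le> x \<bullet> (x - y)"
proof -
  have "x \<bullet> y \<le> norm x * norm y"
    by (rule norm_cauchy_schwarz)
  also have "\<dots> \<le> norm x * norm x"
    using assms by (simp add: mult_left_mono)
  finally show ?thesis
    by (simp add: inner_diff_right dot_square_norm power2_eq_square)
qed

lemma aie_step_descent:
  fixes D T :: "real^'n^'n"
  assumes D_sym: "transpose D = D" and D_psd: "\<And>x. 0 \<le> x \<bullet> (D *v x)"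
    and T_sym: "transpose T = T" and "\<eta> > 0"
    and step: "e + \<eta> *\<^sub>R (D *v e + lam *\<^sub>R e) = d - \<eta> *\<^sub>R (g + T *v d)"
    and "lam \<ge> 0" and "norm d \<le> r" and "lam > 0 \<Longrightarrow> norm e = r"
  shows "trs_f g (D + T) d - trs_f g (D + T) e
    \<ge> (1 / \<eta> - onorm (\<lambda>x. T *v x) / 2) * (norm (e - d))^2"
proof -
  have "0 \<le> lam * (e \<bullet> (e - d))"
  proof (cases "lam > 0")
    case True
    then show ?thesis
      using assms(6-8) inner_diff_nonneg_if_norm_le[of d e] by simp
  qed (use \<open>lam \<ge> 0\<close> in simp)
  moreover have "0 \<le> (d - e) \<bullet> (D *v (d - e))"
    by (rule D_psd)
  moreover have "(d - e) \<bullet> (T *v (d - e)) \<le> onorm (\<lambda>x. T *v x) * (norm (e - d))^2"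
    using quadratic_form_le_onorm[of "d - e" T] by (simp add: norm_minus_commute)
  ultimately show ?thesis
    using aie_step_energy_identity[OF D_sym T_sym \<open>\<eta> > 0\<close> step]
    by (simp add: norm_minus_commute left_diff_distrib)
qed

lemma aie_phi_strict_antimono:
  fixes D :: "real^'n^'n"
  assumes "\<And>i. D$i$i \<ge> 0" and "\<eta> > 0" and "b \<noteq> 0" and "0 \<le> l" and "l < l'"
  shows "aie_phi \<eta> D b l' < aie_phi \<eta> D b l"
proof -
  define p where "p i = 1 + \<eta> * (D$i$i + l)" for i
  define p' where "p' i = 1 + \<eta> * (D$i$i + l')" for i
  have p_pos: "0 < p i" and p_less: "p i < p' i" for i
    using assms by (auto simp: p_def p'_def add_pos_nonneg)
  have "(b$i / p' i)^2 \<le> (b$i / p i)^2" for i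
    using p_pos[of i] p_less[of i]
    by (simp add: power_divide divide_left_mono power_mono mult_pos_pos)
  moreover obtain j where "b$j \<noteq> 0"
    using \<open>b \<noteq> 0\<close> by (auto simp: vec_eq_iff)
  then have "(b$j / p' j)^2 < (b$j / p j)^2"
    using p_pos[of j] p_less[of j]
    by (simp add: power_divide divide_strict_left_mono power_strict_mono mult_pos_pos)
  ultimately show ?thesis
    unfolding aie_phi_def p_def[symmetric] p'_def[symmetric]
    by (intro sum_strict_mono_ex1) auto
qed

lemma aie_phi_le:
  fixes D :: "real^'n^'n"
  assumes "\<And>i. D$i$i \<ge> 0" and "\<eta> > 0" and "0 \<le> lam"
  shows "aie_phi \<eta> D b lam \<le> (norm b / (1 + \<eta> * lam))^2"
proof -
  have q_pos: "0 < 1 + \<eta> * lam"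
    using assms by (simp add: add_pos_nonneg)
  have "aie_phi \<eta> D b lam \<le> (\<Sum>i\<in>UNIV. (b$i / (1 + \<eta> * lam))^2)"
    unfolding aie_phi_def
  proof (rule sum_mono)
    fix i
    have "1 + \<eta> * lam \<le> 1 + \<eta> * (D$i$i + lam)"
      using assms by (simp add: distrib_left)
    then show "(b$i / (1 + \<eta> * (D$i$i + lam)))^2 \<le> (b$i / (1 + \<eta> * lam))^2"
      using q_pos by (simp add: power_divide divide_left_mono power_mono mult_pos_pos)
  qed
  also have "\<dots> = (norm b / (1 + \<eta> * lam))^2"
  proof -
    have "(norm b)^2 = (\<Sum>i\<in>UNIV. (b$i)^2)"
      unfolding power2_norm_eq_inner inner_vec_def by (simp add: power2_eq_square)
    then show ?thesis
      by (simp add: power_divide sum_divide_distrib)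
  qed
  finally show ?thesis .
qed

lemma isCont_aie_phi:
  fixes D :: "real^'n^'n"
  assumes "\<And>i. D$i$i \<ge> 0" and "\<eta> > 0" and "0 \<le> x"
  shows "isCont (aie_phi \<eta> D b) x"
proof -
  have "1 + \<eta> * (D$i$i + x) > 0" for i
    using assms by (simp add: add_pos_nonneg)
  then show ?thesis
    unfolding aie_phi_def[abs_def] by (intro continuous_intros) (auto simp: less_imp_neq[symmetric])
qed

lemma aie_phi_eq_has_pos_root:
  fixes D :: "real^'n^'n"
  assumes D_nonneg: "\<And>i. D$i$i \<ge> 0" and "\<eta> > 0" and "r > 0"
    and "r^2 < aie_phi \<eta> D b 0"
  shows "\<exists>l>0. aie_phi \<eta> D b l = r^2"
proof -
  define u where "u = norm b / r / \<eta>"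
  have "0 \<le> u"
    using assms by (simp add: u_def)
  have "norm b \<le> r * (1 + \<eta> * u)"
    using assms by (simp add: u_def distrib_left)
  then have "norm b / (1 + \<eta> * u) \<le> r"
    using \<open>\<eta> > 0\<close> \<open>0 \<le> u\<close> by (simp add: pos_divide_le_eq add_pos_nonneg)
  then have "(norm b / (1 + \<eta> * u))^2 \<le> r^2"
    using \<open>\<eta> > 0\<close> \<open>0 \<le> u\<close> by (simp add: power_mono add_pos_nonneg)
  then have "aie_phi \<eta> D b u \<le> r^2"
    using aie_phi_le[OF D_nonneg \<open>\<eta> > 0\<close> \<open>0 \<le> u\<close>, of b] by linarith
  moreover have "\<forall>x. 0 \<le> x \<and> x \<le> u \<longrightarrow> isCont (aie_phi \<eta> D b) x"
    using isCont_aie_phi[OF D_nonneg \<open>\<eta> > 0\<close>] by blast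
  ultimately obtain l where "0 \<le> l" "aie_phi \<eta> D b l = r^2"
    using IVT2[of "aie_phi \<eta> D b" u "r^2" 0] \<open>r^2 < aie_phi \<eta> D b 0\<close> \<open>0 \<le> u\<close> by force
  moreover have "l \<noteq> 0"
    using \<open>aie_phi \<eta> D b l = r^2\<close> \<open>r^2 < aie_phi \<eta> D b 0\<close> by auto
  ultimately show ?thesis
    by (intro exI[of _ l]) simp
qed

lemma aie_lambda_props:
  fixes D :: "real^'n^'n"
  assumes D_nonneg: "\<And>i. D$i$i \<ge> 0" and "\<eta> > 0" and "r > 0"
  shows "0 \<le> aie_lambda \<eta> r D b"
    and "aie_phi \<eta> D b (aie_lambda \<eta> r D b) \<le> r^2"
    and "0 < aie_lambda \<eta> r D b \<Longrightarrow> aie_phi \<eta> D b (aie_lambda \<eta> r D b) = r^2"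
proof -
  have "0 \<le> aie_lambda \<eta> r D b \<and> aie_phi \<eta> D b (aie_lambda \<eta> r D b) \<le> r^2
    \<and> (0 < aie_lambda \<eta> r D b \<longrightarrow> aie_phi \<eta> D b (aie_lambda \<eta> r D b) = r^2)"
  proof (cases "aie_phi \<eta> D b 0 \<le> r^2")
    case True
    then show ?thesis by (simp add: aie_lambda_def)
  next
    case False
    then have "b \<noteq> 0"
      using \<open>r > 0\<close> by (auto simp: aie_phi_def)
    from False have "r^2 < aie_phi \<eta> D b 0"
      by simp
    then obtain l where "0 < l" "aie_phi \<eta> D b l = r^2"
      using aie_phi_eq_has_pos_root[OF assms] by blast
    have "\<exists>!l. 0 < l \<and> aie_phi \<eta> D b l = r^2"
    proof (rule ex1I[of _ l])
      fix m
      assume m: "0 < m \<and> aie_phi \<eta> D b m = r^2"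
      show "m = l"
        using aie_phi_strict_antimono[OF D_nonneg \<open>\<eta> > 0\<close> \<open>b \<noteq> 0\<close>, of m l]
          aie_phi_strict_antimono[OF D_nonneg \<open>\<eta> > 0\<close> \<open>b \<noteq> 0\<close>, of l m]
          m \<open>0 < l\<close> \<open>aie_phi \<eta> D b l = r^2\<close>
        by (cases m l rule: linorder_cases) auto
    qed (use \<open>0 < l\<close> \<open>aie_phi \<eta> D b l = r^2\<close> in simp)
    from theI'[OF this] show ?thesis
      using False by (simp add: aie_lambda_def)
  qed
  then show "0 \<le> aie_lambda \<eta> r D b"
    and "aie_phi \<eta> D b (aie_lambda \<eta> r D b) \<le> r^2"
    and "0 < aie_lambda \<eta> r D b \<Longrightarrow> aie_phi \<eta> D b (aie_lambda \<eta> r D b) = r^2"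
    by auto
qed

lemma aie_resolvent_step:
  fixes D :: "real^'n^'n"
  assumes D_diag: "\<And>i j. i \<noteq> j \<Longrightarrow> D$i$j = 0" and D_nonneg: "\<And>i. D$i$i \<ge> 0"
    and "\<eta> > 0" and "r > 0"
    and lam: "lam = aie_lambda \<eta> r D b"
    and e: "e = matrix_inv (mat 1 + \<eta> *\<^sub>R (D + lam *\<^sub>R mat 1)) *v b"
  shows "e + \<eta> *\<^sub>R (D *v e + lam *\<^sub>R e) = b"
    and "norm e \<le> r"
    and "0 < lam \<Longrightarrow> norm e = r"
proof -
  have "0 \<le> lam" and phi_le: "aie_phi \<eta> D b lam \<le> r^2"
    and phi_eq: "0 < lam \<Longrightarrow> aie_phi \<eta> D b lam = r^2"
    unfolding lam by (rule aie_lambda_props[OF D_nonneg \<open>\<eta> > 0\<close> \<open>r > 0\<close>])+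
  define M where "M = mat 1 + \<eta> *\<^sub>R (D + lam *\<^sub>R mat 1)"
  have M_diag: "M$i$j = 0" if "i \<noteq> j" for i j
    using that D_diag by (simp add: M_def mat_def)
  have M_ii: "M$i$i = 1 + \<eta> * (D$i$i + lam)" for i
    by (simp add: M_def mat_def)
  have M_pos: "0 < M$i$i" for i
    using D_nonneg \<open>\<eta> > 0\<close> \<open>0 \<le> lam\<close> by (simp add: M_ii add_pos_nonneg)
  then have M_nz: "M$i$i \<noteq> 0" for i
    by (metis less_irrefl)
  have "e = (\<chi> i. b$i / M$i$i)"
    using diagonal_matrix_inv_mult[OF M_diag M_nz] by (simp add: e M_def)
  then have e_i: "e$i = b$i / (1 + \<eta> * (D$i$i + lam))" for i
    by (simp add: M_ii)
  have "(1 + \<eta> * (D$i$i + lam)) * e$i = b$i" for i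
    using M_pos[of i] by (simp add: e_i M_ii)
  then show "e + \<eta> *\<^sub>R (D *v e + lam *\<^sub>R e) = b"
    by (simp add: diagonal_matrix_vector_mult[OF D_diag] vec_eq_iff algebra_simps)
  have norm_e: "(norm e)^2 = aie_phi \<eta> D b lam"
    unfolding power2_norm_eq_inner inner_vec_def aie_phi_def by (simp add: e_i power2_eq_square)
  show "norm e \<le> r"
    using power2_le_imp_le[of "norm e" r] norm_e phi_le \<open>r > 0\<close> by simp
  show "norm e = r" if "0 < lam"
    using power2_eq_imp_eq[of "norm e" r] norm_e phi_eq[OF that] \<open>r > 0\<close> by simp
qed

lemma aie_d_Suc_characterization:
  fixes D T :: "real^'n^'n" and g :: "real^'n" and k :: nat
  assumes D_diag: "\<And>i j. i \<noteq> j \<Longrightarrow> D$i$j = 0" and D_nonneg: "\<And>i. D$i$i \<ge> 0"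
    and "\<eta> > 0" and "r > 0"
  defines "d \<equiv> aie_d \<eta> r g D T k" and "e \<equiv> aie_d \<eta> r g D T (Suc k)"
    and "lam \<equiv> snd (aie_iter \<eta> r g D T (Suc k))"
  shows "e + \<eta> *\<^sub>R (D *v e + lam *\<^sub>R e) = d - \<eta> *\<^sub>R (g + T *v d)"
    and "0 \<le> lam"
    and "norm e \<le> r"
    and "0 < lam \<Longrightarrow> norm e = r"
proof -
  define b where "b = d - \<eta> *\<^sub>R (g + T *v d)"
  have lam_eq: "lam = aie_lambda \<eta> r D b"
    and e_eq: "e = matrix_inv (mat 1 + \<eta> *\<^sub>R (D + lam *\<^sub>R mat 1)) *v b"
    by (simp_all add: lam_def e_def d_def b_def aie_d_def Let_def)
  note resolvent = aie_resolvent_step[OF D_diag D_nonneg \<open>\<eta> > 0\<close> \<open>r > 0\<close> lam_eq e_eq]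
  show "e + \<eta> *\<^sub>R (D *v e + lam *\<^sub>R e) = d - \<eta> *\<^sub>R (g + T *v d)"
    using resolvent(1) by (simp add: b_def)
  show "0 \<le> lam"
    unfolding lam_eq by (rule aie_lambda_props(1)[OF D_nonneg \<open>\<eta> > 0\<close> \<open>r > 0\<close>])
  show "norm e \<le> r" and "0 < lam \<Longrightarrow> norm e = r"
    using resolvent(2,3) by simp_all
qed

lemma aie_feasible_complementary:
  fixes D T :: "real^'n^'n" and g :: "real^'n" and k :: nat
  assumes "\<And>i j. i \<noteq> j \<Longrightarrow> D$i$j = 0" and "\<And>i. D$i$i \<ge> 0" and "\<eta> > 0" and "r > 0"
  defines "d \<equiv> aie_d \<eta> r g D T k" and "lam \<equiv> snd (aie_iter \<eta> r g D T k)"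
  shows "norm d \<le> r" and "0 \<le> lam" and "lam * ((norm d)^2 - r^2) = 0"
proof -
  have "norm d \<le> r \<and> 0 \<le> lam \<and> (0 < lam \<longrightarrow> norm d = r)"
  proof (cases k)
    case 0
    then show ?thesis
      using \<open>r > 0\<close> by (simp add: d_def lam_def aie_d_def)
  next
    case (Suc m)
    show ?thesis
      using aie_d_Suc_characterization(2-4)[OF assms(1-4), of g T m]
      unfolding d_def lam_def Suc by blast
  qed
  then show "norm d \<le> r" and "0 \<le> lam" and "lam * ((norm d)^2 - r^2) = 0"
    by auto
qed

lemma trs_L_aie_eq_trs_f:
  fixes D T :: "real^'n^'n"
  assumes "\<And>i j. i \<noteq> j \<Longrightarrow> D$i$j = 0" and "\<And>i. D$i$i \<ge> 0" and "\<eta> > 0" and "r > 0"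
  shows "trs_L r g H (aie_d \<eta> r g D T k) (aie_beta \<eta> r g D T k) = trs_f g H (aie_d \<eta> r g D T k)"
  using aie_feasible_complementary(2,3)[OF assms, of g T k]
  by (simp add: trs_L_def aie_beta_def)

theorem mainTheorem4:
  fixes g :: "real^'n" and D T :: "real^'n^'n" and r \<eta> a :: real
  assumes r_pos: "r > 0"
    and g_nz: "g \<noteq> 0"
    and D_diag: "\<forall>i j. i \<noteq> j \<longrightarrow> D$i$j = 0"
    and D_nonneg: "\<forall>i. D$i$i \<ge> 0"
    and T_sym: "transpose T = T"
    and a_pos: "a > 0"
    and eta_pos: "\<eta> > 0"
    and step: "1 / \<eta> \<ge> onorm (\<lambda>x. T *v x) + 2 * a"
  shows "\<forall>k. trs_f g (D + T) (aie_d \<eta> r g D T k) - trs_f g (D + T) (aie_d \<eta> r g D T (Suc k))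
               \<ge> a * (norm (aie_d \<eta> r g D T (Suc k) - aie_d \<eta> r g D T k))^2
          \<and> trs_L r g (D + T) (aie_d \<eta> r g D T k) (aie_beta \<eta> r g D T k)
              - trs_L r g (D + T) (aie_d \<eta> r g D T (Suc k)) (aie_beta \<eta> r g D T (Suc k))
               \<ge> a * (norm (aie_d \<eta> r g D T (Suc k) - aie_d \<eta> r g D T k))^2"
proof
  fix k
  note diag = D_diag[rule_format] and nonneg = D_nonneg[rule_format]
  define d where "d = aie_d \<eta> r g D T k"
  define e where "e = aie_d \<eta> r g D T (Suc k)"
  note iteration_step = aie_d_Suc_characterization[OF diag nonneg eta_pos r_pos, of g T k]
  have "(1 / \<eta> - onorm (\<lambda>x. T *v x) / 2) * (norm (e - d))^2
      \<le> trs_f g (D + T) d - trs_f g (D + T) e"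
    unfolding d_def e_def
    by (rule aie_step_descent[OF diagonal_transpose[OF diag] diagonal_quadratic_form_nonneg[OF diag nonneg]
          T_sym eta_pos iteration_step(1,2)
          aie_feasible_complementary(1)[OF diag nonneg eta_pos r_pos] iteration_step(4)])
  moreover have "a \<le> 1 / \<eta> - onorm (\<lambda>x. T *v x) / 2"
    using step onorm_pos_le[of "\<lambda>x. T *v x"] a_pos by simp
  ultimately have "a * (norm (e - d))^2 \<le> trs_f g (D + T) d - trs_f g (D + T) e"
    by (meson order_trans mult_right_mono zero_le_power2)
  then show "trs_f g (D + T) d - trs_f g (D + T) e \<ge> a * (norm (e - d))^2
    \<and> trs_L r g (D + T) d (aie_beta \<eta> r g D T k)
        - trs_L r g (D + T) e (aie_beta \<eta> r g D T (Suc k)) \<ge> a * (norm (e - d))^2"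
    by (simp add: d_def e_def trs_L_aie_eq_trs_f[OF diag nonneg eta_pos r_pos])
qed

end
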